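(* Let $q$ be a prime power, $\beta$ a primitive element of $\mathbb{F}_{q^2}$, $\bar{\alpha}=\alpha^q$, $\mathrm{Tr}(x)=x+x^q$, and let $\Psi:\mathbb{F}_{q^2}^n\to\mathbb{F}_q^{2n}$ be given by $\Psi(\alpha_0,\ldots,\alpha_{n-1})=\left(\mathrm{Tr}(\beta\alpha_0),\ldots,\mathrm{Tr}(\beta\alpha_{n-1}),\mathrm{Tr}(\bar{\beta}\alpha_0),\ldots,\mathrm{Tr}(\bar{\beta}\alpha_{n-1})\right)$. Let $T:\mathbb{F}_{q^2}^n\to\mathbb{F}_{q^2}^n$ be the conjucyclic shift $T(c_0,\ldots,c_{n-1})=(\bar{c}_{n-1},c_0,\ldots,c_{n-2})$ and $\sigma:\mathbb{F}_q^{2n}\to\mathbb{F}_q^{2n}$ the cyclic shift $\sigma(v_0,\ldots,v_{2n-1})=(v_{2n-1},v_0,\ldots,v_{2n-2})$. Then for every $\vec{\alpha}\in\mathbb{F}_{q^2}^n$, $\Psi(T(\vec{\alpha}))=\sigma(\Psi(\vec{\alpha}))$. *)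

theory Defs
  imports "HOL-Number_Theory.Number_Theory"
begin

text \<open>Elements of the field F_{q^2} are modelled by a finite field type 'a with
  CARD('a) = q^2; F_q is its subfield of elements fixed by x \<mapsto> x^q.\<close>

definition conjq :: "nat \<Rightarrow> 'a::field \<Rightarrow> 'a" where
  "conjq q x = x ^ q"

definition trq :: "nat \<Rightarrow> 'a::field \<Rightarrow> 'a" where
  "trq q x = x + x ^ q"

definition primitive_element :: "'a::{field,finite} \<Rightarrow> bool" where
  "primitive_element b \<longleftrightarrow> b \<noteq> 0 \<and> (\<forall>x. x \<noteq> 0 \<longrightarrow> (\<exists>k::nat. x = b ^ k))"

definition Psi :: "nat \<Rightarrow> 'a::field \<Rightarrow> 'a list \<Rightarrow> 'a list" where
  "Psi q b as = map (\<lambda>a. trq q (b * a)) as @ map (\<lambda>a. trq q (conjq q b * a)) as"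

definition conj_shift :: "nat \<Rightarrow> 'a::field list \<Rightarrow> 'a list" where
  "conj_shift q c = conjq q (last c) # butlast c"

definition cyc_shift :: "'a list \<Rightarrow> 'a list" where
  "cyc_shift v = last v # butlast v"

end

theory Submission
  imports Defs
begin

text \<open>Since \<open>x \<mapsto> x\<^sup>q\<close> is a multiplicative involution of a field with \<open>q\<^sup>2\<close>
  elements, \<open>Tr(\<beta> c\<^sup>q) = \<beta> c\<^sup>q + \<beta>\<^sup>q c = Tr(\<beta>\<^sup>q c)\<close> and \<open>Tr(\<beta>\<^sup>q c\<^sup>q) = Tr(\<beta> c)\<close>.
  These two identities say that the conjugated last coordinate lands in position \<open>0\<close> of
  each half of \<open>\<Psi>\<close>, exactly where the cyclic shift puts the last coordinate of the other
  half.\<close>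

text \<open>The library version \<open>finite_field_power_card_eq_same\<close> is stated for the class
  \<open>finite_field\<close>, which a type variable of sort \<open>{field, finite}\<close> is not known to belong to.\<close>

lemma power_card_UNIV_eq_self:
  fixes x :: "'a::{field,finite}"
  shows "x ^ card (UNIV :: 'a set) = x"
proof (cases "x = 0")
  case False
  have "(\<Prod>y\<in>UNIV-{0}. x * y) = (\<Prod>y\<in>UNIV-{0}. y)"
    by (rule prod.reindex_bij_witness[of _ "\<lambda>y. y / x" "\<lambda>y. x * y"]) (use False in auto)
  then have "x ^ (card (UNIV :: 'a set) - 1) = 1"
    by (simp add: prod.distrib card_Diff_singleton)
  moreover have "card (UNIV :: 'a set) = Suc (card (UNIV :: 'a set) - 1)"
    using finite_UNIV_card_ge_0[where 'a='a] by simp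
  ultimately show ?thesis
    by (metis power_Suc mult_1_right)
qed (use finite_UNIV_card_ge_0[where 'a='a] in auto)

lemma conjq_conjq:
  fixes x :: "'a::{field,finite}"
  assumes "card (UNIV :: 'a set) = q ^ 2"
  shows "conjq q (conjq q x) = x"
  using power_card_UNIV_eq_self[of x] assms
  by (simp add: conjq_def power_mult[symmetric] power2_eq_square)

lemma conjq_mult: "conjq q (x * y) = conjq q x * conjq q y"
  by (simp add: conjq_def power_mult_distrib)

lemma trq_mult_conjq:
  fixes b c :: "'a::{field,finite}"
  assumes "card (UNIV :: 'a set) = q ^ 2"
  shows "trq q (b * conjq q c) = trq q (conjq q b * c)"
  using conjq_conjq[OF assms]
  by (simp add: trq_def conjq_mult flip: conjq_def)

theorem proposition3p5:
  fixes q n :: nat and \<beta> :: "'a::{field,finite}" and \<alpha> :: "'a list"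
  assumes "primepow q"
    and "card (UNIV :: 'a set) = q ^ 2"
    and "primitive_element \<beta>"
    and "n \<ge> 1"
    and "length \<alpha> = n"
  shows "Psi q \<beta> (conj_shift q \<alpha>) = cyc_shift (Psi q \<beta> \<alpha>)"
proof -
  obtain cs c where \<alpha>: "\<alpha> = cs @ [c]"
    using assms(4,5) by (metis list.size(3) not_one_le_zero rev_exhaust)
  show ?thesis
    unfolding \<alpha> Psi_def conj_shift_def cyc_shift_def
    by (simp add: butlast_append trq_mult_conjq[OF assms(2)] conjq_conjq[OF assms(2)])
qed

end
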